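(* Let a group $G$ act on a weighted simplicial complex $\Omega$ on $[n]$, let $\mathcal H_0,\ldots,\mathcal H_n$ be finite-dimensional Hilbert spaces with $\mathcal H_i=\mathcal H_j$ whenever $i,j$ lie in the same $G$-orbit, and $\mathcal V=\mathcal B(\mathcal H_0)\otimes\cdots\otimes\mathcal B(\mathcal H_n)$. Assume that ${\rm rank}_{(\Omega,G)}(\xi)<\infty$ for every $G$-invariant $\xi\in\mathcal V$. Then every positive semidefinite $G$-invariant $\sigma\in\mathcal V$ satisfies ${\rm puri\text{-}rank}_{(\Omega,G)}(\sigma)<\infty$.
   Context: $[n]=\{0,\ldots,n\}$. A weighted simplicial complex (wsc) on $[n]$ is a function $\Omega\colon\mathcal P([n])\to\mathbb N=\{0,1,\ldots\}$ such that $S_1\subseteq S_2$ implies $\Omega(S_1)\mid\Omega(S_2)$; simplices are sets with $\Omega(S)\neq0$, every singleton is assumed to be a simplex, facets are inclusion-maximal simplices, $\mathcal F$ is the set of facets. $\widetilde{\mathcal F}$ is the multiset containing each facet $F$ exactly $\Omega(F)$ times, with collapse map $c$; $\widetilde{\mathcal F}_i$ consists of the copies of facets containing $i$. A group action of $G$ on $\Omega$ is an action on $[n]$ with $\Omega(gS)=\Omega(S)$, together with an action on $\widetilde{\mathcal F}$ with $c(gx)=gc(x)$. $G$ acts on $\mathcal V$ (and on analogous tensor products) by permuting tensor factors according to its action on $[n]$. $\mathcal V\subseteq\mathcal B(\mathcal H_0\otimes\cdots\otimes\mathcal H_n)$, which defines positive semidefiniteness. For $\beta\colon\widetilde{\mathcal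 F}_i\to\mathcal I$, ${}^g\beta\colon\widetilde{\mathcal F}_{gi}\to\mathcal I$ is $x\mapsto\beta(g^{-1}x)$; $\alpha_{\mid i}$ is restriction to $\widetilde{\mathcal F}_i$. For a tensor product $\mathcal W=\mathcal W_0\otimes\cdots\otimes\mathcal W_n$ of vector spaces (equal along orbits), an $(\Omega,G)$-decomposition of $w\in\mathcal W$ is a finite set $\mathcal I$ and local vectors $w^{[i]}_\beta\in\mathcal W_i$ ($\beta\in\mathcal I^{\widetilde{\mathcal F}_i}$) with $w=\sum_{\alpha\in\mathcal I^{\widetilde{\mathcal F}}}w^{[0]}_{\alpha_{\mid0}}\otimes\cdots\otimes w^{[n]}_{\alpha_{\mid n}}$ and $w^{[i]}_\beta=w^{[gi]}_{{}^g\beta}$ for all $i,g,\beta$; ${\rm rank}_{(\Omega,G)}(w)$ is the minimal $|\mathcal I|$ ($\infty$ if none). An $(\Omega,G)$-purification of $\sigma\in\mathcal V$ is an element $\xi\in\mathcal B(\mathcal H_0,\mathcal H_0')\otimes\cdots\otimes\mathcal B(\mathcal H_n,\mathcal H_n')$, for some Hilbert spaces $\mathcal H_i'$, with $\sigma=\xi^*\xi$ and ${\rm rank}_{(\Omega,G)}(\xi)<\infty$; ${\rm puri\text{-}rank}_{(\Omega,G)}(\sigma)$ is the minimum of ${\rm rank}_{(\Omega,G)}(\xi)$ over all $(\Omega,G)$-purifications $\xi$ of $\sigma$ ($\infty$ if none). *)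

theory Defs
  imports "HOL-Algebra.Group_Action" "HOL-Library.FuncSet" "HOL-Library.Complex_Order"
    "HOL-Library.Extended_Nat"
begin

(* Vertex set [n] = {0,...,n} is {..n}. *)

definition wsc :: "nat \<Rightarrow> (nat set \<Rightarrow> nat) \<Rightarrow> bool" where
  "wsc n \<Omega> \<longleftrightarrow>
     (\<forall>S1 S2. S1 \<subseteq> S2 \<and> S2 \<subseteq> {..n} \<longrightarrow> \<Omega> S1 dvd \<Omega> S2) \<and>
     (\<forall>i\<le>n. \<Omega> {i} \<noteq> 0)"

definition simplex :: "nat \<Rightarrow> (nat set \<Rightarrow> nat) \<Rightarrow> nat set \<Rightarrow> bool" where
  "simplex n \<Omega> S \<longleftrightarrow> S \<subseteq> {..n} \<and> \<Omega> S \<noteq> 0"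

definition facets :: "nat \<Rightarrow> (nat set \<Rightarrow> nat) \<Rightarrow> nat set set" where
  "facets n \<Omega> = {F. simplex n \<Omega> F \<and> (\<forall>S. simplex n \<Omega> S \<and> F \<subseteq> S \<longrightarrow> S = F)}"

text \<open>The multiset of facets: each facet F appears Omega(F) times, as the copies (F,k), k < Omega(F).
  The collapse map c is fst.\<close>
definition facets_multi :: "nat \<Rightarrow> (nat set \<Rightarrow> nat) \<Rightarrow> (nat set \<times> nat) set" where
  "facets_multi n \<Omega> = {(F, k). F \<in> facets n \<Omega> \<and> k < \<Omega> F}"

definition facets_multi_at :: "nat \<Rightarrow> (nat set \<Rightarrow> nat) \<Rightarrow> nat \<Rightarrow> (nat set \<times> nat) set" where
  "facets_multi_at n \<Omega> i = {x \<in> facets_multi n \<Omega>. i \<in> fst x}"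

definition wsc_action ::
  "nat \<Rightarrow> (nat set \<Rightarrow> nat) \<Rightarrow> ('g, 'b) monoid_scheme \<Rightarrow> ('g \<Rightarrow> nat \<Rightarrow> nat)
     \<Rightarrow> ('g \<Rightarrow> nat set \<times> nat \<Rightarrow> nat set \<times> nat) \<Rightarrow> bool" where
  "wsc_action n \<Omega> G \<phi> \<psi> \<longleftrightarrow>
     group_action G {..n} \<phi> \<and>
     (\<forall>g\<in>carrier G. \<forall>S. S \<subseteq> {..n} \<longrightarrow> \<Omega> (\<phi> g ` S) = \<Omega> S) \<and>
     group_action G (facets_multi n \<Omega>) \<psi> \<and>
     (\<forall>g\<in>carrier G. \<forall>x\<in>facets_multi n \<Omega>. fst (\<psi> g x) = \<phi> g ` fst x)"

text \<open>Hilbert spaces H_i = C^(d i). Index tuples (basis of the tensor product) with dimensions d.\<close>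
definition tuples :: "nat \<Rightarrow> (nat \<Rightarrow> nat) \<Rightarrow> (nat \<Rightarrow> nat) set" where
  "tuples n d = PiE {..n} (\<lambda>k. {..<d k})"

definition orbit_const :: "('g, 'b) monoid_scheme \<Rightarrow> ('g \<Rightarrow> nat \<Rightarrow> nat) \<Rightarrow> nat \<Rightarrow> (nat \<Rightarrow> nat) \<Rightarrow> bool" where
  "orbit_const G \<phi> n d \<longleftrightarrow> (\<forall>g\<in>carrier G. \<forall>i\<le>n. d (\<phi> g i) = d i)"

text \<open>Elements of B(C^q0,C^p0) (x) ... (x) B(C^qn,C^pn) are represented by their matrix entries
  w a b, with row tuple a in tuples n p and column tuple b in tuples n q (values elsewhere irrelevant).
  The group acts by permuting tensor factors: the factor at position k moves to position g k.\<close>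
definition perm_tuple :: "nat \<Rightarrow> ('g \<Rightarrow> nat \<Rightarrow> nat) \<Rightarrow> 'g \<Rightarrow> (nat \<Rightarrow> nat) \<Rightarrow> (nat \<Rightarrow> nat)" where
  "perm_tuple n \<phi> g a = restrict (\<lambda>k. a (\<phi> g k)) {..n}"

definition G_invariant ::
  "nat \<Rightarrow> ('g, 'b) monoid_scheme \<Rightarrow> ('g \<Rightarrow> nat \<Rightarrow> nat) \<Rightarrow> (nat \<Rightarrow> nat) \<Rightarrow> (nat \<Rightarrow> nat)
     \<Rightarrow> ((nat \<Rightarrow> nat) \<Rightarrow> (nat \<Rightarrow> nat) \<Rightarrow> complex) \<Rightarrow> bool" where
  "G_invariant n G \<phi> p q w \<longleftrightarrow>
     (\<forall>g\<in>carrier G. \<forall>a\<in>tuples n p. \<forall>b\<in>tuples n q.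
        w (perm_tuple n \<phi> g a) (perm_tuple n \<phi> g b) = w a b)"

definition psd :: "nat \<Rightarrow> (nat \<Rightarrow> nat) \<Rightarrow> ((nat \<Rightarrow> nat) \<Rightarrow> (nat \<Rightarrow> nat) \<Rightarrow> complex) \<Rightarrow> bool" where
  "psd n d \<sigma> \<longleftrightarrow> (\<forall>v :: (nat \<Rightarrow> nat) \<Rightarrow> complex.
      0 \<le> (\<Sum>a\<in>tuples n d. \<Sum>b\<in>tuples n d. cnj (v a) * \<sigma> a b * v b))"

text \<open>(Omega,G)-decomposition with index set I = {..<r} of w in W_0 (x) ... (x) W_n,
  W_i = B(C^(q i), C^(p i)) (p i x q i matrices). loc i beta is the local matrix w^[i]_beta,
  for beta : F~_i -> I (extensional functions).\<close>
definition is_decomp ::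
  "nat \<Rightarrow> (nat set \<Rightarrow> nat) \<Rightarrow> ('g, 'b) monoid_scheme \<Rightarrow> ('g \<Rightarrow> nat \<Rightarrow> nat)
     \<Rightarrow> ('g \<Rightarrow> nat set \<times> nat \<Rightarrow> nat set \<times> nat) \<Rightarrow> (nat \<Rightarrow> nat) \<Rightarrow> (nat \<Rightarrow> nat) \<Rightarrow> nat
     \<Rightarrow> (nat \<Rightarrow> (nat set \<times> nat \<Rightarrow> nat) \<Rightarrow> nat \<Rightarrow> nat \<Rightarrow> complex)
     \<Rightarrow> ((nat \<Rightarrow> nat) \<Rightarrow> (nat \<Rightarrow> nat) \<Rightarrow> complex) \<Rightarrow> bool" where
  "is_decomp n \<Omega> G \<phi> \<psi> p q r loc w \<longleftrightarrow>
     (\<forall>i\<le>n. \<forall>\<beta>\<in>facets_multi_at n \<Omega> i \<rightarrow>\<^sub>E {..<r}. \<forall>x y.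
        \<not> (x < p i \<and> y < q i) \<longrightarrow> loc i \<beta> x y = 0) \<and>
     (\<forall>a\<in>tuples n p. \<forall>b\<in>tuples n q.
        w a b = (\<Sum>\<alpha>\<in>facets_multi n \<Omega> \<rightarrow>\<^sub>E {..<r}.
                   \<Prod>i\<le>n. loc i (restrict \<alpha> (facets_multi_at n \<Omega> i)) (a i) (b i))) \<and>
     (\<forall>g\<in>carrier G. \<forall>i\<le>n. \<forall>\<beta>\<in>facets_multi_at n \<Omega> i \<rightarrow>\<^sub>E {..<r}.
        loc i \<beta> = loc (\<phi> g i)
          (restrict (\<lambda>x. \<beta> (\<psi> (inv\<^bsub>G\<^esub> g) x)) (facets_multi_at n \<Omega> (\<phi> g i))))"

definition has_decomp where
  "has_decomp n \<Omega> G \<phi> \<psi> p q r w \<longleftrightarrow> (\<exists>loc. is_decomp n \<Omega> G \<phi> \<psi> p q r loc w)"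

definition omega_rank ::
  "nat \<Rightarrow> (nat set \<Rightarrow> nat) \<Rightarrow> ('g, 'b) monoid_scheme \<Rightarrow> ('g \<Rightarrow> nat \<Rightarrow> nat)
     \<Rightarrow> ('g \<Rightarrow> nat set \<times> nat \<Rightarrow> nat set \<times> nat) \<Rightarrow> (nat \<Rightarrow> nat) \<Rightarrow> (nat \<Rightarrow> nat)
     \<Rightarrow> ((nat \<Rightarrow> nat) \<Rightarrow> (nat \<Rightarrow> nat) \<Rightarrow> complex) \<Rightarrow> enat" where
  "omega_rank n \<Omega> G \<phi> \<psi> p q w = (INF r\<in>{r. has_decomp n \<Omega> G \<phi> \<psi> p q r w}. enat r)"

definition adj_mult ::
  "nat \<Rightarrow> (nat \<Rightarrow> nat) \<Rightarrow> ((nat \<Rightarrow> nat) \<Rightarrow> (nat \<Rightarrow> nat) \<Rightarrow> complex)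
     \<Rightarrow> ((nat \<Rightarrow> nat) \<Rightarrow> (nat \<Rightarrow> nat) \<Rightarrow> complex)" where
  "adj_mult n e \<xi> = (\<lambda>a b. \<Sum>c\<in>tuples n e. cnj (\<xi> c a) * \<xi> c b)"

text \<open>(Omega,G)-purification of sigma: xi with target spaces H'_i = C^(e i) (equal along orbits,
  so that the (Omega,G)-decomposition makes sense), sigma = xi^* xi, and finite rank.\<close>
definition is_purification where
  "is_purification n \<Omega> G \<phi> \<psi> d \<sigma> e \<xi> \<longleftrightarrow>
     orbit_const G \<phi> n e \<and>
     (\<forall>a\<in>tuples n d. \<forall>b\<in>tuples n d. \<sigma> a b = adj_mult n e \<xi> a b) \<and>
     omega_rank n \<Omega> G \<phi> \<psi> e d \<xi> < \<infinity>"

definition puri_rank ::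
  "nat \<Rightarrow> (nat set \<Rightarrow> nat) \<Rightarrow> ('g, 'b) monoid_scheme \<Rightarrow> ('g \<Rightarrow> nat \<Rightarrow> nat)
     \<Rightarrow> ('g \<Rightarrow> nat set \<times> nat \<Rightarrow> nat set \<times> nat) \<Rightarrow> (nat \<Rightarrow> nat)
     \<Rightarrow> ((nat \<Rightarrow> nat) \<Rightarrow> (nat \<Rightarrow> nat) \<Rightarrow> complex) \<Rightarrow> enat" where
  "puri_rank n \<Omega> G \<phi> \<psi> d \<sigma> =
     (INF (e, \<xi>)\<in>{(e, \<xi>). is_purification n \<Omega> G \<phi> \<psi> d \<sigma> e \<xi>}. omega_rank n \<Omega> G \<phi> \<psi> e d \<xi>)"

end

theory Submission
  imports Defs "HOL-Computational_Algebra.Fundamental_Theorem_Algebra" "HOL-Library.Function_Algebras"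
begin

(* The purification is the positive square root X of sigma, realised as a polynomial in sigma.
   Some nonzero polynomial annihilates sigma (finite dimension); since the eigenvalues of a
   positive semidefinite matrix are nonnegative and a Hermitian H has the same kernel as H^2, its
   linear factors can be pruned to a product of distinct factors x - mu with mu >= 0. A real
   polynomial p interpolating sqrt at these mu then satisfies p(sigma)^2 = sigma. Being a real
   polynomial in sigma, X = p(sigma) is Hermitian, so X^* X = sigma, and it is invariant under
   every permutation of the tensor factors that fixes sigma, so it is G-invariant and has finite
   (Omega,G)-rank by hypothesis. *)

section \<open>Matrices indexed by a finite set\<close>

text \<open>A matrix over the index set \<open>T\<close> is a function of two indices; entries outside
  \<open>T \<times> T\<close> are irrelevant, and \<open>mmult\<close> and \<open>mone\<close> set them to 0.\<close>

definition mmult :: "'t set \<Rightarrow> ('t \<Rightarrow> 't \<Rightarrow> 'a::comm_ring_1) \<Rightarrow> ('t \<Rightarrow> 't \<Rightarrow> 'a) \<Rightarrow> 't \<Rightarrow> 't \<Rightarrow> 'a"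
  where "mmult T M N = (\<lambda>a b. if a \<in> T \<and> b \<in> T then \<Sum>c\<in>T. M a c * N c b else 0)"

definition mone :: "'t set \<Rightarrow> 't \<Rightarrow> 't \<Rightarrow> 'a::comm_ring_1"
  where "mone T = (\<lambda>a b. if a \<in> T \<and> b = a then 1 else 0)"

primrec mpow :: "'t set \<Rightarrow> ('t \<Rightarrow> 't \<Rightarrow> 'a::comm_ring_1) \<Rightarrow> nat \<Rightarrow> 't \<Rightarrow> 't \<Rightarrow> 'a" where
  "mpow T A 0 = mone T"
| "mpow T A (Suc k) = mmult T A (mpow T A k)"

definition supported_on :: "'t set \<Rightarrow> ('t \<Rightarrow> 't \<Rightarrow> 'a::zero) \<Rightarrow> bool"
  where "supported_on T M \<longleftrightarrow> (\<forall>a b. a \<notin> T \<or> b \<notin> T \<longrightarrow> M a b = 0)"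

definition poly_mat :: "'t set \<Rightarrow> 'a::comm_ring_1 poly \<Rightarrow> ('t \<Rightarrow> 't \<Rightarrow> 'a) \<Rightarrow> 't \<Rightarrow> 't \<Rightarrow> 'a"
  where "poly_mat T p A = (\<lambda>a b. \<Sum>k\<le>degree p. coeff p k * mpow T A k a b)"

lemma supported_on_mmult: "supported_on T (mmult T M N)"
  by (simp add: supported_on_def mmult_def)

lemma supported_on_mone: "supported_on T (mone T)"
  by (simp add: supported_on_def mone_def)

lemma supported_on_mpow: "supported_on T (mpow T A k)"
  by (cases k) (simp_all add: supported_on_mmult supported_on_mone)

lemma supported_on_poly_mat: "supported_on T (poly_mat T p A)"
  using supported_on_mpow[of T A] by (simp add: supported_on_def poly_mat_def)

lemma mmult_assoc:
  assumes "finite T"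
  shows "mmult T (mmult T A B) C = mmult T A (mmult T B C)"
proof (intro ext)
  fix a b
  show "mmult T (mmult T A B) C a b = mmult T A (mmult T B C) a b"
  proof (cases "a \<in> T \<and> b \<in> T")
    case True
    have "mmult T (mmult T A B) C a b = (\<Sum>c\<in>T. \<Sum>e\<in>T. A a e * B e c * C c b)"
      using True by (simp add: mmult_def sum_distrib_right)
    also have "\<dots> = (\<Sum>e\<in>T. \<Sum>c\<in>T. A a e * B e c * C c b)"
      by (rule sum.swap)
    also have "\<dots> = mmult T A (mmult T B C) a b"
      using True by (simp add: mmult_def sum_distrib_left mult.assoc)
    finally show ?thesis .
  qed (auto simp: mmult_def)
qed

lemma mmult_mone_left:
  assumes "finite T" "supported_on T M"
  shows "mmult T (mone T) M = M"
proof (intro ext)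
  fix a b
  have "(\<Sum>c\<in>T. mone T a c * M c b) = (\<Sum>c\<in>T. if c = a then M c b else 0)" if "a \<in> T"
    using that by (intro sum.cong) (auto simp: mone_def)
  then show "mmult T (mone T) M a b = M a b"
    using assms by (auto simp: mmult_def supported_on_def)
qed

lemma mmult_mone_right:
  assumes "finite T" "supported_on T M"
  shows "mmult T M (mone T) = M"
proof (intro ext)
  fix a b
  have "(\<Sum>c\<in>T. M a c * mone T c b) = (\<Sum>c\<in>T. if c = b then M a c else 0)" if "b \<in> T"
    using that by (intro sum.cong) (auto simp: mone_def)
  then show "mmult T M (mone T) a b = M a b"
    using assms by (auto simp: mmult_def supported_on_def)
qed

lemma mmult_zero_left [simp]: "mmult T 0 M = 0"
  by (simp add: mmult_def fun_eq_iff)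

lemma mmult_zero_right [simp]: "mmult T M 0 = 0"
  by (simp add: mmult_def fun_eq_iff)

lemma mmult_add_left: "mmult T (M + N) Q = mmult T M Q + mmult T N Q"
  by (simp add: mmult_def fun_eq_iff sum.distrib algebra_simps)

lemma mmult_scale_left: "mmult T (\<lambda>a b. c * M a b) Q = (\<lambda>a b. c * mmult T M Q a b)"
  by (simp add: mmult_def fun_eq_iff sum_distrib_left mult.assoc)

lemma mpow_Suc_right:
  assumes "finite T" "supported_on T A"
  shows "mpow T A (Suc k) = mmult T (mpow T A k) A"
proof (induction k)
  case 0
  then show ?case using assms by (simp add: mmult_mone_left mmult_mone_right)
next
  case (Suc k)
  have "mpow T A (Suc (Suc k)) = mmult T A (mmult T (mpow T A k) A)"
    using Suc by simp
  also have "\<dots> = mmult T (mpow T A (Suc k)) A"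
    using assms by (simp add: mmult_assoc)
  finally show ?case .
qed

lemma poly_mat_eq_sum:
  assumes "degree p \<le> m"
  shows "poly_mat T p A a b = (\<Sum>k\<le>m. coeff p k * mpow T A k a b)"
  unfolding poly_mat_def
  by (intro sum.mono_neutral_left) (simp_all add: not_le coeff_eq_0 assms)

lemma poly_mat_0 [simp]: "poly_mat T 0 A = 0"
  by (simp add: poly_mat_def fun_eq_iff)

lemma poly_mat_const: "poly_mat T [:c:] A = (\<lambda>a b. c * mone T a b)"
  by (simp add: poly_mat_def)

lemma poly_mat_add: "poly_mat T (p + q) A = poly_mat T p A + poly_mat T q A"
proof (intro ext)
  fix a b
  let ?m = "max (degree p) (degree q)"
  have "poly_mat T (p + q) A a b = (\<Sum>k\<le>?m. coeff (p + q) k * mpow T A k a b)"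
    by (rule poly_mat_eq_sum) (simp add: degree_add_le)
  then show "poly_mat T (p + q) A a b = (poly_mat T p A + poly_mat T q A) a b"
    using poly_mat_eq_sum[of p ?m T A a b] poly_mat_eq_sum[of q ?m T A a b]
    by (simp add: algebra_simps sum.distrib)
qed

lemma poly_mat_smult: "poly_mat T (smult c p) A = (\<lambda>a b. c * poly_mat T p A a b)"
proof (intro ext)
  fix a b
  have "poly_mat T (smult c p) A a b = (\<Sum>k\<le>degree p. coeff (smult c p) k * mpow T A k a b)"
    by (rule poly_mat_eq_sum) (simp add: degree_smult_le)
  then show "poly_mat T (smult c p) A a b = c * poly_mat T p A a b"
    by (simp add: poly_mat_def sum_distrib_left mult.assoc)
qed

lemma poly_mat_pCons_0: "poly_mat T (pCons 0 p) A = mmult T A (poly_mat T p A)"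
proof (intro ext)
  fix a b
  have "poly_mat T (pCons 0 p) A a b = (\<Sum>k\<le>Suc (degree p). coeff (pCons 0 p) k * mpow T A k a b)"
    by (rule poly_mat_eq_sum) (simp add: degree_pCons_le)
  also have "\<dots> = (\<Sum>k\<le>degree p. coeff p k * mpow T A (Suc k) a b)"
    by (subst sum.atMost_Suc_shift) (simp del: mpow.simps)
  also have "\<dots> = mmult T A (poly_mat T p A) a b"
    by (auto simp: mmult_def poly_mat_def sum_distrib_left algebra_simps intro: sum.swap)
  finally show "poly_mat T (pCons 0 p) A a b = mmult T A (poly_mat T p A) a b" .
qed

lemma poly_mat_pCons:
  "poly_mat T (pCons c p) A = (\<lambda>a b. c * mone T a b) + mmult T A (poly_mat T p A)"
proof -
  have "pCons c p = [:c:] + pCons 0 p" by simp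
  then show ?thesis by (simp only: poly_mat_add poly_mat_const poly_mat_pCons_0)
qed

lemma poly_mat_x:
  assumes "finite T" "supported_on T A"
  shows "poly_mat T [:0, 1:] A = A"
  using assms by (simp add: poly_mat_pCons_0 poly_mat_const mmult_mone_right)

lemma poly_mat_mult:
  assumes "finite T"
  shows "poly_mat T (p * q) A = mmult T (poly_mat T p A) (poly_mat T q A)"
proof (induction p rule: pCons_induct)
  case (pCons c p)
  have "pCons c p * q = smult c q + pCons 0 (p * q)" by simp
  then have "poly_mat T (pCons c p * q) A
      = (\<lambda>a b. c * poly_mat T q A a b) + mmult T A (mmult T (poly_mat T p A) (poly_mat T q A))"
    by (simp only: poly_mat_add poly_mat_smult poly_mat_pCons_0 pCons.IH)
  also have "\<dots> = mmult T (poly_mat T (pCons c p) A) (poly_mat T q A)"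
    by (simp only: poly_mat_pCons mmult_add_left mmult_scale_left
        mmult_mone_left[OF assms supported_on_poly_mat] mmult_assoc[OF assms])
  finally show ?case .
qed (simp add: mmult_def fun_eq_iff)

lemma sum_fun_apply: "(\<Sum>a\<in>A. f a) x = (\<Sum>a\<in>A. f a x)"
  by (induction A rule: infinite_finite_induct) auto

lemma finitely_supported_family_dependent:
  fixes v :: "nat \<Rightarrow> 'u \<Rightarrow> 'a::field"
  assumes finU: "finite U" and supp: "\<And>k x. x \<notin> U \<Longrightarrow> v k x = 0"
  shows "\<exists>c. (\<exists>k\<le>card U. c k \<noteq> 0) \<and> (\<forall>x. (\<Sum>k\<le>card U. c k * v k x) = 0)"
proof (cases "inj_on v {..card U}")
  case True
  interpret FV: vector_space "\<lambda>c (f::'u \<Rightarrow> 'a) x. c * f x"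
    by unfold_locales (auto simp: fun_eq_iff algebra_simps)
  define \<delta> where "\<delta> = (\<lambda>(q::'u) x. if x = q then (1::'a) else 0)"
  have "v k = (\<Sum>q\<in>U. (\<lambda>x. v k q * \<delta> q x))" for k
    using finU supp by (auto simp: fun_eq_iff sum_fun_apply \<delta>_def if_distrib sum.delta cong: if_cong)
  also have "\<dots> k \<in> FV.span (\<delta> ` U)" for k
    by (intro FV.span_sum FV.span_scale FV.span_base) auto
  finally have span: "v ` {..card U} \<subseteq> FV.span (\<delta> ` U)" by auto
  have "FV.dependent (v ` {..card U})"
  proof (rule ccontr)
    assume "FV.independent (v ` {..card U})"
    from FV.independent_span_bound[OF _ this span] finU
    have "card (v ` {..card U}) \<le> card (\<delta> ` U)" by simp
    also have "\<dots> \<le> card U" by (rule card_image_le[OF finU])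
    finally show False using True by (simp add: card_image)
  qed
  then obtain u where u: "\<exists>w\<in>v ` {..card U}. u w \<noteq> 0" "(\<Sum>w\<in>v ` {..card U}. (\<lambda>x. u w * w x)) = 0"
    using FV.dependent_finite by auto
  show ?thesis
  proof (intro exI[of _ "\<lambda>k. u (v k)"] conjI allI)
    show "\<exists>k\<le>card U. u (v k) \<noteq> 0" using u(1) by auto
    show "(\<Sum>k\<le>card U. u (v k) * v k x) = 0" for x
      using fun_cong[OF u(2), of x] by (simp add: sum_fun_apply sum.reindex[OF True])
  qed
next
  case False
  then obtain i j where ij: "i \<le> card U" "j \<le> card U" "i \<noteq> j" "v i = v j"
    unfolding inj_on_def by auto
  define c :: "nat \<Rightarrow> 'a" where "c k = (if k = j then 1 else 0) - (if k = i then 1 else 0)" for k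
  have "c k * v k x = (if k = j then v j x else 0) - (if k = i then v i x else 0)" for k x
    by (auto simp: c_def)
  then have "(\<Sum>k\<le>card U. c k * v k x) = 0" for x
    using ij by (simp add: sum_subtractf)
  then show ?thesis
    using ij by (intro exI[of _ c]) (auto simp: c_def)
qed

lemma poly_mat_annihilator_exists:
  fixes A :: "'t \<Rightarrow> 't \<Rightarrow> 'a::field"
  assumes "finite T"
  obtains f where "f \<noteq> 0" "poly_mat T f A = 0"
proof -
  define m where "m = card (T \<times> T)"
  have "\<exists>c. (\<exists>k\<le>m. c k \<noteq> 0) \<and> (\<forall>x. (\<Sum>k\<le>m. c k * (\<lambda>(a, b). mpow T A k a b) x) = 0)"
    unfolding m_def
    by (rule finitely_supported_family_dependent)
      (use assms supported_on_mpow[of T A] in \<open>auto simp: supported_on_def\<close>)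
  then obtain c where c: "\<exists>k\<le>m. c k \<noteq> 0" "\<And>a b. (\<Sum>k\<le>m. c k * mpow T A k a b) = 0"
    by force
  define f where "f = (\<Sum>k\<le>m. monom (c k) k)"
  have coeff_f: "coeff f k = (if k \<le> m then c k else 0)" for k
    by (simp add: f_def coeff_sum coeff_monom)
  have "f \<noteq> 0"
    using c(1) coeff_f by (metis coeff_0)
  moreover have "poly_mat T f A a b = 0" for a b
  proof -
    have "degree f \<le> m" by (rule degree_le) (simp add: coeff_f)
    then show ?thesis using c(2) by (simp add: poly_mat_eq_sum coeff_f)
  qed
  ultimately show thesis by (intro that) (auto simp: fun_eq_iff)
qed

definition perm_invariant :: "'t set \<Rightarrow> ('t \<Rightarrow> 't) \<Rightarrow> ('t \<Rightarrow> 't \<Rightarrow> 'a) \<Rightarrow> bool"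
  where "perm_invariant T \<pi> M \<longleftrightarrow> (\<forall>a\<in>T. \<forall>b\<in>T. M (\<pi> a) (\<pi> b) = M a b)"

lemma perm_invariant_mmult:
  assumes "bij_betw \<pi> T T" "perm_invariant T \<pi> M" "perm_invariant T \<pi> N"
  shows "perm_invariant T \<pi> (mmult T M N)"
  unfolding perm_invariant_def
proof (intro ballI)
  fix a b assume ab: "a \<in> T" "b \<in> T"
  then have "mmult T M N (\<pi> a) (\<pi> b) = (\<Sum>c\<in>T. M (\<pi> a) c * N c (\<pi> b))"
    using bij_betwE[OF assms(1)] by (simp add: mmult_def)
  also have "\<dots> = (\<Sum>c\<in>T. M (\<pi> a) (\<pi> c) * N (\<pi> c) (\<pi> b))"
    by (rule sum.reindex_bij_betw[OF assms(1), symmetric])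
  also have "\<dots> = mmult T M N a b"
    using assms(2,3) ab by (simp add: perm_invariant_def mmult_def)
  finally show "mmult T M N (\<pi> a) (\<pi> b) = mmult T M N a b" .
qed

lemma perm_invariant_mone: "bij_betw \<pi> T T \<Longrightarrow> perm_invariant T \<pi> (mone T)"
  by (auto simp: perm_invariant_def mone_def bij_betw_def inj_on_def)

lemma perm_invariant_poly_mat:
  assumes "bij_betw \<pi> T T" "perm_invariant T \<pi> A"
  shows "perm_invariant T \<pi> (poly_mat T p A)"
proof -
  have "perm_invariant T \<pi> (mpow T A k)" for k
    by (induction k) (simp_all add: perm_invariant_mone perm_invariant_mmult assms)
  then show ?thesis by (simp add: perm_invariant_def poly_mat_def)
qed

section \<open>Hermitian and positive semidefinite matrices\<close>

definition hermitian :: "('t \<Rightarrow> 't \<Rightarrow> complex) \<Rightarrow> bool"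
  where "hermitian M \<longleftrightarrow> (\<forall>a b. M a b = cnj (M b a))"

lemma hermitian_mmult_commuting:
  assumes "hermitian M" "hermitian N" "mmult T M N = mmult T N M"
  shows "hermitian (mmult T M N)"
proof -
  have "cnj (M b c * N c a) = N a c * M c b" for a b c
    using assms(1,2) unfolding hermitian_def by (metis complex_cnj_mult mult.commute)
  then have "cnj (mmult T M N b a) = mmult T N M a b" for a b
    by (simp add: mmult_def)
  then show ?thesis using assms(3) by (simp add: hermitian_def)
qed

lemma hermitian_poly_mat:
  assumes "finite T" "supported_on T A" "hermitian A" "\<forall>k. coeff p k \<in> \<real>"
  shows "hermitian (poly_mat T p A)"
proof -
  have herm_pow: "hermitian (mpow T A k)" for k
  proof (induction k)
    case 0 then show ?case by (auto simp: hermitian_def mone_def)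
  next
    case (Suc k)
    then show ?case
      using hermitian_mmult_commuting[OF assms(3) Suc] mpow_Suc_right[OF assms(1,2), of k] by simp
  qed
  have "cnj (coeff p k * mpow T A k b a) = coeff p k * mpow T A k a b" for k a b
    using assms(4) herm_pow Reals_cnj_iff unfolding hermitian_def by (metis complex_cnj_mult)
  then show ?thesis
    unfolding hermitian_def poly_mat_def by simp
qed

definition quad_form :: "'t set \<Rightarrow> ('t \<Rightarrow> 't \<Rightarrow> complex) \<Rightarrow> ('t \<Rightarrow> complex) \<Rightarrow> complex"
  where "quad_form T A v = (\<Sum>a\<in>T. \<Sum>b\<in>T. cnj (v a) * A a b * v b)"

definition psd_on :: "'t set \<Rightarrow> ('t \<Rightarrow> 't \<Rightarrow> complex) \<Rightarrow> bool"
  where "psd_on T A \<longleftrightarrow> (\<forall>v. 0 \<le> quad_form T A v)"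

lemma quad_form_restrict:
  assumes "finite T" "U \<subseteq> T" "\<forall>x\<in>T - U. v x = 0"
  shows "quad_form T A v = quad_form U A v"
  unfolding quad_form_def using assms
  by (intro sum.mono_neutral_right sum.mono_neutral_cong_right) (auto simp: sum.neutral finite_subset)

lemma psd_on_hermitian:
  assumes fin: "finite T" and psd: "psd_on T A" and supp: "supported_on T A"
  shows "hermitian A"
  unfolding hermitian_def
proof (intro allI)
  fix a b
  have real: "Im (quad_form T A v) = 0" for v
    using psd by (simp add: psd_on_def less_eq_complex_def)
  have point: "quad_form T A (\<lambda>x. if x = c then 1 else 0) = A c c" if "c \<in> T" for c
    using fin that by (subst quad_form_restrict[where U = "{c}"]) (auto simp: quad_form_def)
  have pair: "quad_form T A (\<lambda>x. if x = a then 1 else if x = b then z else 0)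
      = A a a + A a b * z + cnj z * A b a + cnj z * A b b * z"
    if "a \<in> T" "b \<in> T" "a \<noteq> b" for z
    using fin that by (subst quad_form_restrict[where U = "{a, b}"]) (auto simp: quad_form_def)
  show "A a b = cnj (A b a)"
  proof (cases "a \<in> T \<and> b \<in> T \<and> a \<noteq> b")
    case True
    have "Im (A a a) = 0" "Im (A b b) = 0"
      using real point True by metis+
    then have "Im (A a b + A b a) = 0" "Re (A a b - A b a) = 0"
      using real[of "\<lambda>x. if x = a then 1 else if x = b then 1 else 0"]
        real[of "\<lambda>x. if x = a then 1 else if x = b then \<i> else 0"] True pair
      by (auto simp: algebra_simps)
    then show ?thesis by (simp add: complex_eq_iff)
  next
    case False
    then show ?thesis
      using supp real point by (cases "a = b") (auto simp: supported_on_def complex_eq_iff)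
  qed
qed

lemma sum_cnj_mult_self: "(\<Sum>a\<in>T. cnj (y a) * y a) = of_real (\<Sum>a\<in>T. (cmod (y a))\<^sup>2)"
  unfolding of_real_sum by (intro sum.cong) (metis complex_norm_square mult.commute)+

lemma sum_cnj_mult_self_eq_0:
  assumes "finite T" "(\<Sum>a\<in>T. cnj (y a) * y a) = 0" "a \<in> T"
  shows "y a = 0"
  using assms by (simp add: sum_cnj_mult_self sum_nonneg_eq_0_iff del: of_real_sum)

lemma psd_eigenvalue_nonneg:
  assumes fin: "finite T" and psd: "psd_on T A"
    and eigen: "\<And>a. a \<in> T \<Longrightarrow> (\<Sum>c\<in>T. A a c * y c) = \<mu> * y a"
    and nonzero: "a0 \<in> T" "y a0 \<noteq> 0"
  shows "0 \<le> \<mu>"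
proof -
  define r where "r = (\<Sum>a\<in>T. (cmod (y a))\<^sup>2)"
  have "quad_form T A y = (\<Sum>a\<in>T. cnj (y a) * (\<Sum>c\<in>T. A a c * y c))"
    by (simp add: quad_form_def sum_distrib_left mult.assoc)
  also have "\<dots> = (\<Sum>a\<in>T. \<mu> * (cnj (y a) * y a))"
    by (intro sum.cong) (simp_all add: eigen)
  also have "\<dots> = \<mu> * of_real r"
    by (simp only: r_def sum_cnj_mult_self flip: sum_distrib_left)
  finally have "0 \<le> \<mu> * of_real r"
    using psd by (metis psd_on_def)
  moreover have "r > 0"
    using fin nonzero unfolding r_def by (intro sum_pos2) auto
  ultimately show ?thesis
    by (auto simp: less_eq_complex_def zero_le_mult_iff)
qed

lemma poly_mat_linear:
  assumes "finite T" "supported_on T A"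
  shows "poly_mat T [:-\<mu>, 1:] A = (\<lambda>a b. A a b - \<mu> * mone T a b)"
  using mmult_mone_right[OF assms] by (simp add: poly_mat_pCons poly_mat_const fun_eq_iff)

lemma psd_kernel_linear_factor:
  assumes fin: "finite T" and supp: "supported_on T A" and psd: "psd_on T A"
    and suppY: "supported_on T Y" and kernel: "mmult T (poly_mat T [:-\<mu>, 1:] A) Y = 0"
    and neg: "\<not> 0 \<le> \<mu>"
  shows "Y = 0"
proof -
  have "Y a0 b = 0" for a0 b
  proof (cases "a0 \<in> T \<and> b \<in> T")
    case True
    have "(\<Sum>c\<in>T. A a c * Y c b) = \<mu> * Y a b" if "a \<in> T" for a
    proof -
      have "0 = (\<Sum>c\<in>T. (A a c - \<mu> * mone T a c) * Y c b)"
        using fun_cong[OF fun_cong[OF kernel, of a], of b] True that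
        by (simp add: mmult_def poly_mat_linear[OF fin supp])
      also have "\<dots> = (\<Sum>c\<in>T. A a c * Y c b - (if c = a then \<mu> * Y a b else 0))"
        using that by (intro sum.cong) (auto simp: mone_def algebra_simps)
      also have "\<dots> = (\<Sum>c\<in>T. A a c * Y c b) - \<mu> * Y a b"
        using fin that by (simp add: sum_subtractf)
      finally show ?thesis by simp
    qed
    then show ?thesis
      using psd_eigenvalue_nonneg[OF fin psd, of "\<lambda>a. Y a b" \<mu> a0] True neg by blast
  qed (use suppY in \<open>auto simp: supported_on_def\<close>)
  then show ?thesis by (simp add: fun_eq_iff)
qed

lemma hermitian_mmult_mmult_eq_0:
  assumes fin: "finite T" and herm: "hermitian H" and eq: "mmult T H (mmult T H Y) = 0"
  shows "mmult T H Y = 0"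
proof -
  define Z where "Z = mmult T H Y"
  have "Z a0 b = 0" for a0 b
  proof (cases "a0 \<in> T \<and> b \<in> T")
    case True
    have "cnj (H a c) = H c a" for a c
      using herm by (metis hermitian_def)
    then have "(\<Sum>a\<in>T. cnj (Z a b) * Z a b) = (\<Sum>a\<in>T. \<Sum>c\<in>T. H c a * cnj (Y c b) * Z a b)"
      using True by (simp add: Z_def mmult_def sum_distrib_right)
    also have "\<dots> = (\<Sum>c\<in>T. cnj (Y c b) * mmult T H Z c b)"
      using True by (subst sum.swap) (simp add: mmult_def sum_distrib_left mult_ac)
    also have "\<dots> = 0"
      using eq by (simp add: Z_def)
    finally show ?thesis
      using sum_cnj_mult_self_eq_0[OF fin, of "\<lambda>a. Z a b" a0] True by blast
  qed (auto simp: Z_def mmult_def)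
  then show ?thesis by (simp add: Z_def fun_eq_iff)
qed

section \<open>Square roots of positive semidefinite matrices\<close>

text \<open>A negative root \<open>\<mu>\<close> is cancelled because \<open>A - \<mu>\<close> is injective; a repeated
  nonnegative root is cancelled because \<open>A - \<mu>\<close> is Hermitian.\<close>

lemma psd_annihilator_absorb_factor:
  assumes fin: "finite T" and supp: "supported_on T A" and psd: "psd_on T A"
    and S: "finite S" "S \<subseteq> {\<nu>. 0 \<le> \<nu>}"
    and ann: "poly_mat T ([:-\<mu>, 1:] * ((\<Prod>\<nu>\<in>S. [:-\<nu>, 1:]) * r)) A = 0"
  obtains S' where "finite S'" "S' \<subseteq> {\<nu>. 0 \<le> \<nu>}" "poly_mat T ((\<Prod>\<nu>\<in>S'. [:-\<nu>, 1:]) * r) A = 0"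
proof -
  define W where "W = (\<Prod>\<nu>\<in>S. [:-\<nu>, 1:]) * r"
  have HW: "mmult T (poly_mat T [:-\<mu>, 1:] A) (poly_mat T W A) = 0"
    using ann unfolding W_def by (simp only: poly_mat_mult[OF fin, of "[:-\<mu>, 1:]"])
  consider "\<not> 0 \<le> \<mu>" | "0 \<le> \<mu>" "\<mu> \<in> S" | "0 \<le> \<mu>" "\<mu> \<notin> S" by blast
  then show thesis
  proof cases
    case 1
    then have "poly_mat T W A = 0"
      using psd_kernel_linear_factor[OF fin supp psd supported_on_poly_mat HW] by blast
    then show thesis using S that W_def by blast
  next
    case 2
    have "W = [:-\<mu>, 1:] * ((\<Prod>\<nu>\<in>S - {\<mu>}. [:-\<nu>, 1:]) * r)"
      unfolding W_def prod.remove[OF S(1) 2(2)] mult.assoc by (rule refl)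
    then have "poly_mat T W A
        = mmult T (poly_mat T [:-\<mu>, 1:] A) (poly_mat T ((\<Prod>\<nu>\<in>S - {\<mu>}. [:-\<nu>, 1:]) * r) A)"
      by (simp only: poly_mat_mult[OF fin])
    moreover have "\<forall>k. coeff [:-\<mu>, 1:] k \<in> \<real>"
      using 2(1) by (auto simp: coeff_pCons less_eq_complex_def complex_is_Real_iff split: nat.split)
    then have "hermitian (poly_mat T [:-\<mu>, 1:] A)"
      by (intro hermitian_poly_mat[OF fin supp psd_on_hermitian[OF fin psd supp]])
    ultimately have "poly_mat T W A = 0"
      using hermitian_mmult_mmult_eq_0[OF fin] HW by metis
    then show thesis using S that W_def by blast
  next
    case 3
    have "poly_mat T ((\<Prod>\<nu>\<in>insert \<mu> S. [:-\<nu>, 1:]) * r) A = 0"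
      using ann unfolding prod.insert[OF S(1) 3(2)] mult.assoc .
    with S 3 show thesis by (intro that[of "insert \<mu> S"]) auto
  qed
qed

lemma psd_annihilator_nonneg_simple_roots:
  assumes fin: "finite T" and supp: "supported_on T A" and psd: "psd_on T A"
  obtains S where "finite S" "S \<subseteq> {\<mu>. 0 \<le> \<mu>}" "poly_mat T (\<Prod>\<mu>\<in>S. [:-\<mu>, 1:]) A = 0"
proof -
  have absorb: "\<exists>S. finite S \<and> S \<subseteq> {\<mu>. 0 \<le> \<mu>} \<and> poly_mat T ((\<Prod>\<mu>\<in>S. [:-\<mu>, 1:]) * r) A = 0"
    if "poly_mat T ((\<Prod>\<nu>\<in>#R. [:-\<nu>, 1:]) * r) A = 0" for R r
    using that
  proof (induction R arbitrary: r)
    case empty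
    then show ?case by (intro exI[of _ "{}"]) simp
  next
    case (add \<kappa> R)
    have "poly_mat T ((\<Prod>\<nu>\<in>#R. [:-\<nu>, 1:]) * ([:-\<kappa>, 1:] * r)) A = 0"
      using add.prems by (simp only: image_mset_add_mset prod_mset.add_mset mult_ac)
    from add.IH[OF this] obtain S where S: "finite S" "S \<subseteq> {\<mu>. 0 \<le> \<mu>}"
      "poly_mat T ((\<Prod>\<mu>\<in>S. [:-\<mu>, 1:]) * ([:-\<kappa>, 1:] * r)) A = 0"
      by blast
    then have "poly_mat T ([:-\<kappa>, 1:] * ((\<Prod>\<mu>\<in>S. [:-\<mu>, 1:]) * r)) A = 0"
      by (simp only: mult_ac)
    then obtain S' where "finite S'" "S' \<subseteq> {\<mu>. 0 \<le> \<mu>}" "poly_mat T ((\<Prod>\<mu>\<in>S'. [:-\<mu>, 1:]) * r) A = 0"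
      by (rule psd_annihilator_absorb_factor[OF fin supp psd S(1,2)])
    then show ?case by blast
  qed
  obtain f :: "complex poly" where f: "f \<noteq> 0" "poly_mat T f A = 0"
    using poly_mat_annihilator_exists[OF fin] .
  then have "poly_mat T (smult (lead_coeff f) (\<Prod>\<nu>\<in>#proots f. [:-\<nu>, 1:])) A = 0"
    by (simp only: complex_poly_decompose_multiset)
  then have "poly_mat T ((\<Prod>\<nu>\<in>#proots f. [:-\<nu>, 1:]) * 1) A = 0"
    using f(1) by (simp add: poly_mat_smult fun_eq_iff)
  from absorb[OF this] show thesis using that by auto
qed

lemma poly_interpolation_exists:
  fixes h :: "'a::field \<Rightarrow> 'a"
  assumes "finite X"
  obtains q where "\<And>x. x \<in> X \<Longrightarrow> poly q x = h x"
proof -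
  have "\<exists>q. \<forall>x\<in>X. poly q x = h x"
    using assms
  proof (induction X rule: finite_induct)
    case (insert x X)
    then obtain q where q: "\<forall>y\<in>X. poly q y = h y" by blast
    define w where "w = (\<Prod>y\<in>X. [:-y, 1:])"
    have "poly w y = (\<Prod>y'\<in>X. y - y')" for y
      by (simp add: w_def poly_prod)
    then have "poly w x \<noteq> 0" "\<forall>y\<in>X. poly w y = 0"
      using insert.hyps by auto
    then have "\<forall>y\<in>insert x X. poly (q + smult ((h x - poly q x) / poly w x) w) y = h y"
      using q by auto
    then show ?case by blast
  qed simp
  then show thesis using that by blast
qed

lemma prod_linear_factors_dvd:
  fixes p :: "'a::idom poly"
  assumes "finite R" "\<And>\<mu>. \<mu> \<in> R \<Longrightarrow> poly p \<mu> = 0"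
  shows "(\<Prod>\<mu>\<in>R. [:-\<mu>, 1:]) dvd p"
  using assms
proof (induction R arbitrary: p rule: finite_induct)
  case (insert \<mu> R)
  obtain p' where p: "p = [:-\<mu>, 1:] * p'"
    using insert.prems poly_eq_0_iff_dvd by blast
  have "poly p' \<nu> = 0" if "\<nu> \<in> R" for \<nu>
    using insert that by (auto simp: p)
  then have "(\<Prod>\<mu>\<in>R. [:-\<mu>, 1:]) dvd p'"
    by (rule insert.IH)
  then show ?case
    unfolding p prod.insert[OF insert.hyps] by (rule mult_dvd_mono[OF dvd_refl])
qed simp

lemma poly_map_poly_of_real:
  "poly (map_poly of_real p) (of_real x) = (of_real (poly p x) :: 'a::{comm_ring_1, real_algebra_1})"
  by (induction p) (auto simp: map_poly_pCons)

lemma psd_sqrt_poly: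
  assumes fin: "finite T" and supp: "supported_on T A" and psd: "psd_on T A"
  obtains p where "\<forall>k. coeff p k \<in> \<real>" "mmult T (poly_mat T p A) (poly_mat T p A) = A"
proof -
  obtain S where S: "finite S" "S \<subseteq> {\<mu>. 0 \<le> \<mu>}" "poly_mat T (\<Prod>\<mu>\<in>S. [:-\<mu>, 1:]) A = 0"
    using psd_annihilator_nonneg_simple_roots[OF fin supp psd] .
  obtain q where q: "\<And>x. x \<in> Re ` S \<Longrightarrow> poly q x = sqrt x"
    using poly_interpolation_exists[of "Re ` S"] S(1) by blast
  define p where "p = map_poly (of_real :: real \<Rightarrow> complex) q"
  have "poly (p * p - [:0, 1:]) \<mu> = 0" if "\<mu> \<in> S" for \<mu>
  proof -
    have real: "\<mu> = of_real (Re \<mu>)" and nonneg: "0 \<le> Re \<mu>"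
      using S(2) that by (auto simp: less_eq_complex_def complex_eq_iff)
    have "poly p \<mu> = of_real (sqrt (Re \<mu>))"
      using q that by (subst real) (simp add: p_def poly_map_poly_of_real)
    then have "poly (p * p) \<mu> = of_real (sqrt (Re \<mu>) * sqrt (Re \<mu>))"
      by (simp only: poly_mult of_real_mult)
    also have "\<dots> = \<mu>"
      using nonneg real by simp
    finally show ?thesis by simp
  qed
  then obtain k where "p * p - [:0, 1:] = (\<Prod>\<mu>\<in>S. [:-\<mu>, 1:]) * k"
    using prod_linear_factors_dvd[OF S(1)] by blast
  then have "p * p = [:0, 1:] + (\<Prod>\<mu>\<in>S. [:-\<mu>, 1:]) * k"
    by (simp add: algebra_simps)
  then have "mmult T (poly_mat T p A) (poly_mat T p A)
      = poly_mat T [:0, 1:] A + mmult T (poly_mat T (\<Prod>\<mu>\<in>S. [:-\<mu>, 1:]) A) (poly_mat T k A)"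
    by (simp only: poly_mat_mult[OF fin, symmetric] poly_mat_add)
  also have "\<dots> = A"
    by (simp add: poly_mat_x[OF fin supp] S(3))
  finally have "mmult T (poly_mat T p A) (poly_mat T p A) = A" .
  moreover have "\<forall>k. coeff p k \<in> \<real>"
    by (simp add: p_def coeff_map_poly)
  ultimately show thesis using that by blast
qed

section \<open>Permuting tensor factors\<close>

lemma perm_tuple_in:
  assumes ga: "group_action G {..n} \<phi>" and oc: "orbit_const G \<phi> n d"
    and g: "g \<in> carrier G" and a: "a \<in> tuples n d"
  shows "perm_tuple n \<phi> g a \<in> tuples n d"
  unfolding perm_tuple_def tuples_def restrict_PiE_iff
proof
  fix k assume k: "k \<in> {..n}"
  have gk: "\<phi> g k \<in> {..n}" using group_action.element_image[OF ga g k refl] .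
  have "a (\<phi> g k) < d (\<phi> g k)" using a gk unfolding tuples_def by (auto simp: PiE_iff)
  moreover have "d (\<phi> g k) = d k" using oc g k unfolding orbit_const_def by auto
  ultimately show "a (\<phi> g k) \<in> {..<d k}" by simp
qed

lemma perm_tuple_comp:
  assumes ga: "group_action G {..n} \<phi>" and g: "g \<in> carrier G" and h: "h \<in> carrier G"
  shows "perm_tuple n \<phi> g (perm_tuple n \<phi> h a) = perm_tuple n \<phi> (h \<otimes>\<^bsub>G\<^esub> g) a"
  unfolding perm_tuple_def
proof (rule restrict_ext)
  fix k assume k: "k \<in> {..n}"
  have gk: "\<phi> g k \<in> {..n}" using group_action.element_image[OF ga g k refl] .
  show "restrict (\<lambda>k. a (\<phi> h k)) {..n} (\<phi> g k) = a (\<phi> (h \<otimes>\<^bsub>G\<^esub> g) k)"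
    using gk group_action.composition_rule[OF ga k h g] by simp
qed

lemma perm_tuple_one:
  assumes ga: "group_action G {..n} \<phi>" and a: "a \<in> tuples n d"
  shows "perm_tuple n \<phi> \<one>\<^bsub>G\<^esub> a = a"
proof -
  have "perm_tuple n \<phi> \<one>\<^bsub>G\<^esub> a = restrict a {..n}"
    unfolding perm_tuple_def
  proof (rule restrict_ext)
    fix k assume k: "k \<in> {..n}"
    have "\<phi> \<one>\<^bsub>G\<^esub> k = k"
      using group_action.id_eq_one[OF ga] k by (metis restrict_apply')
    then show "a (\<phi> \<one>\<^bsub>G\<^esub> k) = a k" by simp
  qed
  also have "\<dots> = a" using a unfolding tuples_def by simp
  finally show ?thesis .
qed

lemma perm_tuple_bij:
  assumes ga: "group_action G {..n} \<phi>" and oc: "orbit_const G \<phi> n d" and g: "g \<in> carrier G"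
  shows "bij_betw (perm_tuple n \<phi> g) (tuples n d) (tuples n d)"
proof -
  have grp: "group G" using ga unfolding group_action_def group_hom_def group_hom_axioms_def by simp
  have ig: "inv\<^bsub>G\<^esub> g \<in> carrier G" using group.inv_closed[OF grp g] .
  show ?thesis
  proof (rule bij_betw_byWitness[where f' = "perm_tuple n \<phi> (inv\<^bsub>G\<^esub> g)"])
    show "\<forall>a\<in>tuples n d. perm_tuple n \<phi> (inv\<^bsub>G\<^esub> g) (perm_tuple n \<phi> g a) = a"
      using perm_tuple_comp[OF ga ig g] perm_tuple_one[OF ga] group.r_inv[OF grp g] by simp
    show "\<forall>a\<in>tuples n d. perm_tuple n \<phi> g (perm_tuple n \<phi> (inv\<^bsub>G\<^esub> g) a) = a"
      using perm_tuple_comp[OF ga g ig] perm_tuple_one[OF ga] group.l_inv[OF grp g] by simp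
    show "perm_tuple n \<phi> g ` tuples n d \<subseteq> tuples n d"
      using perm_tuple_in[OF ga oc g] by auto
    show "perm_tuple n \<phi> (inv\<^bsub>G\<^esub> g) ` tuples n d \<subseteq> tuples n d"
      using perm_tuple_in[OF ga oc ig] by auto
  qed
qed

lemma G_invariant_psd_sqrt:
  assumes ga: "group_action G {..n} \<phi>" and oc: "orbit_const G \<phi> n d"
    and psd: "psd n d \<sigma>" and inv: "G_invariant n G \<phi> d d \<sigma>"
  obtains X where "G_invariant n G \<phi> d d X"
    "\<And>a b. a \<in> tuples n d \<Longrightarrow> b \<in> tuples n d \<Longrightarrow> \<sigma> a b = adj_mult n d X a b"
proof -
  define T where "T = tuples n d"
  have fin: "finite T"
    by (simp add: T_def tuples_def finite_PiE)
  define A where "A = (\<lambda>a b. if a \<in> T \<and> b \<in> T then \<sigma> a b else 0)"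
  have supp: "supported_on T A"
    by (simp add: supported_on_def A_def)
  have psdA: "psd_on T A"
    using psd by (simp add: psd_on_def psd_def quad_form_def A_def T_def)
  obtain p where p: "\<forall>k. coeff p k \<in> \<real>" "mmult T (poly_mat T p A) (poly_mat T p A) = A"
    using psd_sqrt_poly[OF fin supp psdA] .
  define X where "X = poly_mat T p A"
  have "perm_invariant T (perm_tuple n \<phi> g) X" if g: "g \<in> carrier G" for g
  proof -
    have bij: "bij_betw (perm_tuple n \<phi> g) T T"
      unfolding T_def by (rule perm_tuple_bij[OF ga oc g])
    have "perm_invariant T (perm_tuple n \<phi> g) A"
      using inv g bij_betwE[OF bij] by (simp add: perm_invariant_def G_invariant_def A_def T_def)
    then show ?thesis
      unfolding X_def by (rule perm_invariant_poly_mat[OF bij])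
  qed
  then have "G_invariant n G \<phi> d d X"
    by (simp add: G_invariant_def perm_invariant_def T_def)
  moreover have "\<sigma> a b = adj_mult n d X a b" if "a \<in> T" "b \<in> T" for a b
  proof -
    have "hermitian X"
      unfolding X_def by (rule hermitian_poly_mat[OF fin supp psd_on_hermitian[OF fin psdA supp] p(1)])
    then have "cnj (X c a) = X a c" for c
      by (metis hermitian_def)
    then have "adj_mult n d X a b = mmult T X X a b"
      using that by (simp add: adj_mult_def mmult_def T_def)
    also have "\<dots> = \<sigma> a b"
      using p(2) that by (simp add: X_def A_def)
    finally show ?thesis by simp
  qed
  ultimately show thesis
    using that unfolding T_def by blast
qed

theorem theorem3p20:
  fixes n :: nat and \<Omega> :: "nat set \<Rightarrow> nat" and G :: "('g, 'b) monoid_scheme"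
    and \<phi> :: "'g \<Rightarrow> nat \<Rightarrow> nat" and \<psi> :: "'g \<Rightarrow> nat set \<times> nat \<Rightarrow> nat set \<times> nat"
    and d :: "nat \<Rightarrow> nat"
  assumes "wsc n \<Omega>"
    and "wsc_action n \<Omega> G \<phi> \<psi>"
    and "orbit_const G \<phi> n d"
    and "\<forall>\<xi>. G_invariant n G \<phi> d d \<xi> \<longrightarrow> omega_rank n \<Omega> G \<phi> \<psi> d d \<xi> < \<infinity>"
  shows "\<forall>\<sigma>. psd n d \<sigma> \<and> G_invariant n G \<phi> d d \<sigma> \<longrightarrow> puri_rank n \<Omega> G \<phi> \<psi> d \<sigma> < \<infinity>"
proof (intro allI impI)
  fix \<sigma> assume \<sigma>: "psd n d \<sigma> \<and> G_invariant n G \<phi> d d \<sigma>"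
  have "group_action G {..n} \<phi>"
    using assms(2) by (simp add: wsc_action_def)
  then obtain X where X: "G_invariant n G \<phi> d d X"
    "\<And>a b. a \<in> tuples n d \<Longrightarrow> b \<in> tuples n d \<Longrightarrow> \<sigma> a b = adj_mult n d X a b"
    using G_invariant_psd_sqrt assms(3) \<sigma> by blast
  have rank: "omega_rank n \<Omega> G \<phi> \<psi> d d X < \<infinity>"
    using assms(4) X(1) by blast
  then have "is_purification n \<Omega> G \<phi> \<psi> d \<sigma> d X"
    using assms(3) X(2) by (simp add: is_purification_def)
  then have "puri_rank n \<Omega> G \<phi> \<psi> d \<sigma> \<le> omega_rank n \<Omega> G \<phi> \<psi> d d X"
    unfolding puri_rank_def by (intro INF_lower2[of "(d, X)"]) auto
  then show "puri_rank n \<Omega> G \<phi> \<psi> d \<sigma> < \<infinity>"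
    using rank by (rule le_less_trans)
qed

end
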